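(* Let $(\Gamma,\gamma)$ be a connected spin network which is not a trivial component, and let $e_0$ be a bridge of $\Gamma$ (an edge whose removal disconnects the graph). If $\gamma(e_0)\neq 0$ then $\langle\Gamma,\gamma\rangle^P=0$.
   Context: A cubic ribbon graph $\Gamma=(G,R)$: $G$ a finite graph with all vertices of degree $3$ (multiple edges and loops allowed, a loop counting $2$; a trivial component is a single edge closing on itself with no vertex), $R$ a cyclic ordering of half-edges at each vertex, determining an embedding in a closed orientable surface. A decoration $\gamma:E(G)\to\{0,1,\dots\}$ is admissible if at each vertex with incident decorations $a,b,c$ (loop counted twice) $a+b+c$ is even and $|a-b|\le c\le a+b$; a spin network is $(\Gamma,\gamma)$ with $\gamma$ admissible. Penrose evaluation: replace each edge $e$ by $\gamma(e)$ parallel strands on the thickened embedded graph; at each vertex join strands without crossings, $\frac{a+b-c}{2}$ between the $a$- and $b$-edges, $\frac{a+c-b}{2}$ between $a,c$, $\frac{b+c-a}{2}$ between $b,c$; insert a permutation $\sigma_e\in\mathfrak S_{\gamma(e)}$ on each edge; $\langle\Gamma,\gamma\rangle^P=\sum_{\vec\sigma}(\prod_e\mathrm{sign}\,\sigma_e)(-2)^{N(\vec\sigma)}$, with $N(\vec\sigma)$ the number of resulting closed curves. *)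

theory Defs
  imports "HOL-Combinatorics.Permutations"
begin

text \<open>Combinatorial model of a cubic ribbon graph (without trivial components):
  a finite set H of half-edges (darts), a rotation s whose orbits (all of size 3)
  are the vertices, with cyclic order h, s h, s (s h) around the vertex, and a
  fixed-point-free involution i whose orbits are the edges.  Loops and multiple
  edges are allowed automatically.\<close>

definition cubic_ribbon :: "nat set \<Rightarrow> (nat \<Rightarrow> nat) \<Rightarrow> (nat \<Rightarrow> nat) \<Rightarrow> bool" where
  "cubic_ribbon H s i \<longleftrightarrow> finite H \<and> s permutes H \<and> i permutes H \<and>
     (\<forall>h\<in>H. i (i h) = h \<and> i h \<noteq> h \<and> s h \<noteq> h \<and> s (s (s h)) = h)"

definition admissible :: "nat set \<Rightarrow> (nat \<Rightarrow> nat) \<Rightarrow> (nat \<Rightarrow> nat) \<Rightarrow> (nat \<Rightarrow> nat) \<Rightarrow> bool" where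
  "admissible H s i g \<longleftrightarrow> (\<forall>h\<in>H. g (i h) = g h) \<and>
     (\<forall>h\<in>H. let a = g h; b = g (s h); c = g (s (s h)) in
        even (a + b + c) \<and> \<bar>int a - int b\<bar> \<le> int c \<and> c \<le> a + b)"

definition spin_network :: "nat set \<Rightarrow> (nat \<Rightarrow> nat) \<Rightarrow> (nat \<Rightarrow> nat) \<Rightarrow> (nat \<Rightarrow> nat) \<Rightarrow> bool" where
  "spin_network H s i g \<longleftrightarrow> cubic_ribbon H s i \<and> admissible H s i g"

text \<open>Incidence relation on darts: same vertex, or two ends of an edge.  Removing the
  edge {h0, i h0} deletes the second kind of link for that edge only.\<close>

definition graph_rel :: "nat set \<Rightarrow> (nat \<Rightarrow> nat) \<Rightarrow> (nat \<Rightarrow> nat) \<Rightarrow> nat set \<Rightarrow> (nat \<times> nat) set" where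
  "graph_rel H s i E = {(h, s h) | h. h \<in> H} \<union> {(h, i h) | h. h \<in> H \<and> h \<in> E}"

definition connected_rg :: "nat set \<Rightarrow> (nat \<Rightarrow> nat) \<Rightarrow> (nat \<Rightarrow> nat) \<Rightarrow> bool" where
  "connected_rg H s i \<longleftrightarrow>
     (\<forall>x\<in>H. \<forall>y\<in>H. (x, y) \<in> (graph_rel H s i H \<union> (graph_rel H s i H)\<inverse>)\<^sup>*)"

definition is_bridge :: "nat set \<Rightarrow> (nat \<Rightarrow> nat) \<Rightarrow> (nat \<Rightarrow> nat) \<Rightarrow> nat \<Rightarrow> bool" where
  "is_bridge H s i h0 \<longleftrightarrow> h0 \<in> H \<and>
     (let E = H - {h0, i h0} in
      \<not> (\<forall>x\<in>H. \<forall>y\<in>H. (x, y) \<in> (graph_rel H s i E \<union> (graph_rel H s i E)\<inverse>)\<^sup>*))"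

text \<open>Strand endpoints: (h, j) with j < g h, numbered counterclockwise around the vertex
  of h.  At dart x the last k x strands are joined (nested, without crossings) to the
  first k x strands of s x, where k x = (g x + g (s x) - g (s (s x))) div 2.\<close>

definition strand_pts :: "nat set \<Rightarrow> (nat \<Rightarrow> nat) \<Rightarrow> (nat \<times> nat) set" where
  "strand_pts H g = (SIGMA h:H. {..<g h})"

definition vertex_match :: "nat set \<Rightarrow> (nat \<Rightarrow> nat) \<Rightarrow> (nat \<Rightarrow> nat) \<Rightarrow> ((nat \<times> nat) \<times> (nat \<times> nat)) set" where
  "vertex_match H s g = {((x, g x - 1 - j), (s x, j)) | x j. x \<in> H \<and>
      j < (g x + g (s x) - g (s (s x))) div 2}"

text \<open>The permutation p r of
  {..<g r} is inserted on the edge; with p r = id the strands run parallel, which in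
  the counterclockwise numbering at both ends joins (r, j) to (i r, g r - 1 - j).\<close>

definition edge_reps :: "nat set \<Rightarrow> (nat \<Rightarrow> nat) \<Rightarrow> nat set" where
  "edge_reps H i = {h \<in> H. h < i h}"

definition edge_match :: "nat set \<Rightarrow> (nat \<Rightarrow> nat) \<Rightarrow> (nat \<Rightarrow> nat) \<Rightarrow> (nat \<Rightarrow> nat \<Rightarrow> nat)
    \<Rightarrow> ((nat \<times> nat) \<times> (nat \<times> nat)) set" where
  "edge_match H i g p = {((r, j), (i r, g r - 1 - p r j)) | r j. r \<in> edge_reps H i \<and> j < g r}"

definition num_curves :: "nat set \<Rightarrow> (nat \<Rightarrow> nat) \<Rightarrow> (nat \<Rightarrow> nat) \<Rightarrow> (nat \<Rightarrow> nat)
    \<Rightarrow> (nat \<Rightarrow> nat \<Rightarrow> nat) \<Rightarrow> nat" where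
  "num_curves H s i g p =
     (let M = vertex_match H s g \<union> edge_match H i g p
      in card (strand_pts H g // Restr ((M \<union> M\<inverse>)\<^sup>*) (strand_pts H g)))"

definition penrose :: "nat set \<Rightarrow> (nat \<Rightarrow> nat) \<Rightarrow> (nat \<Rightarrow> nat) \<Rightarrow> (nat \<Rightarrow> nat) \<Rightarrow> int" where
  "penrose H s i g =
     (\<Sum>p \<in> Pi\<^sub>E (edge_reps H i) (\<lambda>r. {q. q permutes {..<g r}}).
        (\<Prod>r \<in> edge_reps H i. sign (p r)) * (-2) ^ num_curves H s i g p)"

end

theory Submission
  imports Defs
begin

(* Cut the strands of the bridge edge {r0, i r0}; the remaining matchings (at the vertices and
   along the other edges) join strand endpoints in pairs. Let C be the set of endpoints reachable
   from (r0, 0). The vertex matching pairs up all of C and the edge matching pairs up the points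
   of C off the bridge, so C contains an even number of bridge endpoints; as the bridge separates
   r0 from i r0, they all sit at the r0 end, so some (r0, b) with b > 0 is joined to (r0, 0).
   Precomposing the permutation on the bridge with the transposition (0 b) then leaves the
   closed curves unchanged and flips the sign: a sign-reversing involution on the terms of the
   state sum. *)

abbreviation equivcl :: "('a \<times> 'a) set \<Rightarrow> ('a \<times> 'a) set" where
  "equivcl R \<equiv> (R \<union> R\<inverse>)\<^sup>*"

lemma equivcl_sym: "(x, y) \<in> equivcl R \<Longrightarrow> (y, x) \<in> equivcl R"
  using symD[OF sym_rtrancl[OF sym_Un_converse]] .

lemma equivcl_map:
  assumes link: "\<And>a b. (a, b) \<in> M \<Longrightarrow> (h a, h b) \<in> equivcl R"
    and "(x, y) \<in> equivcl M"
  shows "(h x, h y) \<in> equivcl R"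
  using assms(2)
proof (induction rule: rtrancl_induct)
  case base
  show ?case by (rule rtrancl_refl)
next
  case (step y z)
  from \<open>(y, z) \<in> M \<union> M\<inverse>\<close> have "(h y, h z) \<in> equivcl R"
  proof
    assume "(y, z) \<in> M\<inverse>"
    then show ?thesis using equivcl_sym[OF link[of z y]] by simp
  qed (rule link)
  with step.IH show ?case by (rule rtrancl_trans)
qed

lemma equivcl_subset_equivcl:
  assumes "M \<subseteq> equivcl R"
  shows "equivcl M \<subseteq> equivcl R"
proof clarify
  fix x y assume "(x, y) \<in> equivcl M"
  then show "(x, y) \<in> equivcl R"
    using equivcl_map[where h = id and M = M and R = R] assms by auto
qed

lemma equivcl_rewire_transpose:
  assumes uv: "(a u, a v) \<in> equivcl R" and "u \<in> A" "v \<in> A"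
  shows "equivcl (R \<union> {(a j, c (f (Transposition.transpose u v j))) | j. j \<in> A})
       = equivcl (R \<union> {(a j, c (f j)) | j. j \<in> A})"
proof -
  have a_transpose: "(a j, a (Transposition.transpose u v j)) \<in> equivcl R" for j
    using uv equivcl_sym[OF uv] by (cases "j = u \<or> j = v") (auto simp: transpose_def)
  have rewired: "equivcl (R \<union> {(a j, c (f' (Transposition.transpose u v j))) | j. j \<in> A})
      \<subseteq> equivcl (R \<union> {(a j, c (f' j)) | j. j \<in> A})" for f'
  proof (rule equivcl_subset_equivcl, safe)
    let ?L = "{(a j, c (f' j)) | j. j \<in> A}"
    fix j assume "j \<in> A"
    let ?k = "Transposition.transpose u v j"
    have "?k \<in> A" using \<open>j \<in> A\<close> assms(2,3) by (auto simp: transpose_def)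
    then have "(a ?k, c (f' ?k)) \<in> equivcl (R \<union> ?L)" by blast
    moreover have "equivcl R \<subseteq> equivcl (R \<union> ?L)" by (rule rtrancl_mono) blast
    then have "(a j, a ?k) \<in> equivcl (R \<union> ?L)" using a_transpose by blast
    ultimately show "(a j, c (f' ?k)) \<in> equivcl (R \<union> ?L)"
      by (rule rtrancl_trans[rotated])
  qed blast
  show ?thesis
    using rewired[of f] rewired[of "f \<circ> Transposition.transpose u v"] by (simp add: antisym)
qed

lemma even_card_if_involution:
  assumes "finite A" and "\<And>x. x \<in> A \<Longrightarrow> f x \<in> A" "\<And>x. x \<in> A \<Longrightarrow> f (f x) = x"
    and "\<And>x. x \<in> A \<Longrightarrow> f x \<noteq> x"
  shows "even (card A)"
proof -
  let ?orbits = "(\<lambda>x. {x, f x}) ` A"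
  have orbit: "{x, f x} = {z, f z}" if "x \<in> A" "z \<in> {x, f x}" for x z
    using that assms(3)[OF \<open>x \<in> A\<close>] by auto
  have "2 * card ?orbits = card (\<Union> ?orbits)"
  proof (rule card_partition)
    show "finite (\<Union> ?orbits)" "finite ?orbits" using assms(1) by auto
    show "card c = 2" if "c \<in> ?orbits" for c
    proof -
      from that obtain x where "x \<in> A" "c = {x, f x}" by blast
      then show ?thesis using assms(4)[of x] by simp
    qed
    show "c1 \<inter> c2 = {}" if c12: "c1 \<in> ?orbits" "c2 \<in> ?orbits" and "c1 \<noteq> c2" for c1 c2
    proof (rule ccontr)
      obtain x y where xy: "x \<in> A" "c1 = {x, f x}" "y \<in> A" "c2 = {y, f y}"
        using c12 by blast
      assume "c1 \<inter> c2 \<noteq> {}"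
      then obtain z where "z \<in> c1" "z \<in> c2" by blast
      then have "c1 = {z, f z}" "c2 = {z, f z}"
        using orbit[OF xy(1), of z] orbit[OF xy(3), of z] xy by simp_all
      then show False using \<open>c1 \<noteq> c2\<close> by simp
    qed
  qed
  moreover have "\<Union> ?orbits = A" using assms(2) by blast
  ultimately show ?thesis by (metis dvd_triv_left)
qed

lemma sum_eq_0_if_sign_reversing_involution:
  fixes F :: "'a \<Rightarrow> 'b :: linordered_ab_group_add"
  assumes "\<And>x. x \<in> A \<Longrightarrow> \<phi> x \<in> A" "\<And>x. x \<in> A \<Longrightarrow> \<phi> (\<phi> x) = x"
    and "\<And>x. x \<in> A \<Longrightarrow> F (\<phi> x) = - F x"
  shows "sum F A = 0"
proof -
  have "bij_betw \<phi> A A" by (rule bij_betwI[of _ _ _ \<phi>]) (use assms(1,2) in auto)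
  then have "sum F A = (\<Sum>x\<in>A. F (\<phi> x))" by (rule sum.reindex_bij_betw[symmetric])
  also have "\<dots> = - sum F A" using assms(3) by (simp add: sum_negf)
  finally show ?thesis by simp
qed

lemma even_card_component_if_involution:
  assumes "finite Q" and "\<And>x. x \<in> Q \<Longrightarrow> f x \<in> Q" "\<And>x. x \<in> Q \<Longrightarrow> f (f x) = x"
    and "\<And>x. x \<in> Q \<Longrightarrow> f x \<noteq> x" "\<And>x. x \<in> Q \<Longrightarrow> (x, f x) \<in> R"
  shows "even (card {y \<in> Q. (x0, y) \<in> R\<^sup>*})"
proof (rule even_card_if_involution)
  show "finite {y \<in> Q. (x0, y) \<in> R\<^sup>*}" using assms(1) by simp
  fix y assume y: "y \<in> {y \<in> Q. (x0, y) \<in> R\<^sup>*}"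
  then show "f y \<in> {y \<in> Q. (x0, y) \<in> R\<^sup>*}"
    using assms(2)[of y] rtrancl_into_rtrancl[OF _ assms(5)[of y]] by simp
  show "f (f y) = y" "f y \<noteq> y" using y assms(3,4) by simp_all
qed

definition joined :: "(nat \<Rightarrow> nat) \<Rightarrow> (nat \<Rightarrow> nat) \<Rightarrow> nat \<Rightarrow> nat" where
  "joined s g x = (g x + g (s x) - g (s (s x))) div 2"

lemma vertex_match_joined:
  "vertex_match H s g = {((x, g x - 1 - j), (s x, j)) | x j. x \<in> H \<and> j < joined s g x}"
  by (simp add: vertex_match_def joined_def)

(* Strand m at x runs to s x if it is among the last joined s g x strands at x, and otherwise to
   s (s x), whose last strands are the ones joined to x. *)
fun vertex_partner :: "(nat \<Rightarrow> nat) \<Rightarrow> (nat \<Rightarrow> nat) \<Rightarrow> nat \<times> nat \<Rightarrow> nat \<times> nat" where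
  "vertex_partner s g (x, m) =
     (if g x - joined s g x \<le> m then (s x, g x - 1 - m) else (s (s x), g (s (s x)) - 1 - m))"

definition edge_perms :: "nat set \<Rightarrow> (nat \<Rightarrow> nat) \<Rightarrow> (nat \<Rightarrow> nat) \<Rightarrow> (nat \<Rightarrow> nat \<Rightarrow> nat) set" where
  "edge_perms H i g = Pi\<^sub>E (edge_reps H i) (\<lambda>r. {q. q permutes {..<g r}})"

definition edge_match_except :: "nat set \<Rightarrow> (nat \<Rightarrow> nat) \<Rightarrow> (nat \<Rightarrow> nat) \<Rightarrow> (nat \<Rightarrow> nat \<Rightarrow> nat)
    \<Rightarrow> nat \<Rightarrow> ((nat \<times> nat) \<times> (nat \<times> nat)) set" where
  "edge_match_except H i g p r0 =
     {((r, j), (i r, g r - 1 - p r j)) | r j. r \<in> edge_reps H i \<and> r \<noteq> r0 \<and> j < g r}"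

lemma edge_match_split:
  "r0 \<in> edge_reps H i \<Longrightarrow> edge_match H i g p = edge_match_except H i g p r0
     \<union> {((r0, j), (i r0, g r0 - 1 - p r0 j)) | j. j \<in> {..<g r0}}"
  unfolding edge_match_def edge_match_except_def by blast

lemma edge_match_except_update:
  "edge_match_except H i g (p(r0 := f)) r0 = edge_match_except H i g p r0"
  by (auto simp: edge_match_except_def)

fun edge_partner :: "(nat \<Rightarrow> nat) \<Rightarrow> (nat \<Rightarrow> nat) \<Rightarrow> (nat \<Rightarrow> nat \<Rightarrow> nat) \<Rightarrow> nat \<times> nat \<Rightarrow> nat \<times> nat" where
  "edge_partner i g p (h, j) =
     (if h < i h then (i h, g h - 1 - p h j) else (i h, inv (p (i h)) (g (i h) - 1 - j)))"

lemma edge_perm_permutes: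
  "p \<in> edge_perms H i g \<Longrightarrow> r \<in> edge_reps H i \<Longrightarrow> p r permutes {..<g r}"
  by (auto simp: edge_perms_def)

lemma num_curves_transpose_at:
  assumes r0: "r0 \<in> edge_reps H i" and b: "b < g r0"
    and linked: "((r0, 0), (r0, b)) \<in> equivcl (vertex_match H s g \<union> edge_match_except H i g p r0)"
  shows "num_curves H s i g (p(r0 := p r0 \<circ> Transposition.transpose 0 b)) = num_curves H s i g p"
proof -
  let ?R = "vertex_match H s g \<union> edge_match_except H i g p r0"
  have "equivcl (?R \<union> {((r0, j), (i r0, g r0 - 1 - p r0 (Transposition.transpose 0 b j)))
        | j. j \<in> {..<g r0}})
      = equivcl (?R \<union> {((r0, j), (i r0, g r0 - 1 - p r0 j)) | j. j \<in> {..<g r0}})"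
    by (rule equivcl_rewire_transpose[where a = "Pair r0" and c = "\<lambda>k. (i r0, g r0 - 1 - k)"
          and A = "{..<g r0}" and f = "p r0", OF linked]) (use b in simp_all)
  then show ?thesis
    by (simp add: num_curves_def Let_def edge_match_split[OF r0] edge_match_except_update
        Un_assoc)
qed

lemma sign_transpose_at:
  fixes p :: "'a \<Rightarrow> nat \<Rightarrow> nat"
  assumes "finite E" "r0 \<in> E" "p r0 permutes {..<n}" and "0 < b" "b < n"
  shows "(\<Prod>r\<in>E. sign ((p(r0 := p r0 \<circ> Transposition.transpose 0 b)) r))
       = - (\<Prod>r\<in>E. sign (p r))"
proof -
  have "permutation (p r0)" using assms(3) by (rule permutes_imp_permutation[rotated]) simp
  then have "sign (p r0 \<circ> Transposition.transpose 0 b) = - sign (p r0)"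
    using assms(4) by (simp add: sign_compose permutation_swap_id sign_swap_id)
  moreover have "(\<Prod>r\<in>E - {r0}. sign ((p(r0 := p r0 \<circ> Transposition.transpose 0 b)) r))
      = (\<Prod>r\<in>E - {r0}. sign (p r))"
    by (rule prod.cong) auto
  ultimately show ?thesis
    by (simp add: prod.remove[OF assms(1,2)])
qed

locale spin_net =
  fixes H :: "nat set" and s i g :: "nat \<Rightarrow> nat"
  assumes spin_network: "spin_network H s i g"
begin

lemma finite_darts: "finite H"
  and s_closed: "h \<in> H \<Longrightarrow> s h \<in> H"
  and i_closed: "h \<in> H \<Longrightarrow> i h \<in> H"
  and s_cube: "h \<in> H \<Longrightarrow> s (s (s h)) = h"
  and s_no_fix: "h \<in> H \<Longrightarrow> s h \<noteq> h"
  and i_involution: "h \<in> H \<Longrightarrow> i (i h) = h"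
  and i_no_fix: "h \<in> H \<Longrightarrow> i h \<noteq> h"
  and g_i: "h \<in> H \<Longrightarrow> g (i h) = g h"
  using spin_network
  by (auto simp: spin_network_def cubic_ribbon_def admissible_def permutes_in_image)

lemma i_not_edge_rep: "r \<in> edge_reps H i \<Longrightarrow> i r \<notin> edge_reps H i"
  by (auto simp: edge_reps_def i_involution)

lemma joined_add_joined:
  assumes "x \<in> H"
  shows "joined s g x + joined s g (s (s x)) = g x"
proof -
  define a b c where "a = g x" and "b = g (s x)" and "c = g (s (s x))"
  have adm: "even (a + b + c)" "\<bar>int a - int b\<bar> \<le> int c" "c \<le> a + b"
    using spin_network assms
    by (auto simp: spin_network_def admissible_def Let_def a_def b_def c_def)
  from adm(1) obtain t where "a + b + c = 2 * t" by (elim evenE)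
  moreover have "b \<le> a + c" using adm(2) by linarith
  ultimately have t: "a + b + c = 2 * t" "b \<le> t" "c \<le> t" using adm(3) by linarith+
  have "a + b - c = 2 * (t - c)" "c + a - b = 2 * (t - b)" using t by linarith+
  then have "joined s g x = t - c" "joined s g (s (s x)) = t - b"
    unfolding joined_def s_cube[OF assms] s_cube[OF s_closed[OF assms]] a_def b_def c_def
    by simp_all
  then show ?thesis using t by (simp add: a_def)
qed

lemma vertex_match_partner:
  assumes "(q, q') \<in> vertex_match H s g"
  shows "vertex_partner s g q = q'" "vertex_partner s g q' = q"
    "q \<in> strand_pts H g" "q' \<in> strand_pts H g" "q' \<noteq> q"
proof -
  from assms obtain x j where x: "x \<in> H" "j < joined s g x"
    and q: "q = (x, g x - 1 - j)" "q' = (s x, j)"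
    unfolding vertex_match_joined by blast
  have at_x: "joined s g x + joined s g (s (s x)) = g x"
    using joined_add_joined[OF x(1)] .
  have at_sx: "joined s g (s x) + joined s g x = g (s x)"
    using joined_add_joined[OF s_closed[OF x(1)]] s_cube[OF x(1)] by simp
  show "vertex_partner s g q = q'" "vertex_partner s g q' = q"
    using q x(2) at_x at_sx s_cube[OF x(1)] by auto
  show "q \<in> strand_pts H g" "q' \<in> strand_pts H g"
    using q x at_x at_sx s_closed by (auto simp: strand_pts_def)
  show "q' \<noteq> q" using q s_no_fix[OF x(1)] by simp
qed

lemma strand_pt_vertex_matched:
  assumes "(x, m) \<in> strand_pts H g"
  shows "\<exists>q'. ((x, m), q') \<in> vertex_match H s g \<union> (vertex_match H s g)\<inverse>"
proof -
  have x: "x \<in> H" "m < g x" using assms by (auto simp: strand_pts_def)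
  show ?thesis
  proof (cases "g x - joined s g x \<le> m")
    case True
    then have "((x, g x - 1 - (g x - 1 - m)), (s x, g x - 1 - m)) \<in> vertex_match H s g"
      unfolding vertex_match_joined using x by auto
    then show ?thesis using x(2) by (auto simp: Suc_diff_Suc)
  next
    case False
    then have "m < joined s g (s (s x))"
      using joined_add_joined[OF x(1)] by linarith
    then have "((s (s x), g (s (s x)) - 1 - m), (s (s (s x)), m)) \<in> vertex_match H s g"
      unfolding vertex_match_joined using s_closed x(1) by blast
    then show ?thesis using s_cube[OF x(1)] by auto
  qed
qed

lemma vertex_partner_involution:
  assumes "q \<in> strand_pts H g"
  shows "vertex_partner s g q \<in> strand_pts H g" "vertex_partner s g (vertex_partner s g q) = q"
    "vertex_partner s g q \<noteq> q"
    "(q, vertex_partner s g q) \<in> vertex_match H s g \<union> (vertex_match H s g)\<inverse>"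
proof -
  obtain q' where "(q, q') \<in> vertex_match H s g \<union> (vertex_match H s g)\<inverse>"
    using strand_pt_vertex_matched[of "fst q" "snd q"] assms by auto
  then have "vertex_partner s g q = q' \<and> vertex_partner s g q' = q \<and> q' \<in> strand_pts H g \<and> q' \<noteq> q
      \<and> (q, q') \<in> vertex_match H s g \<union> (vertex_match H s g)\<inverse>"
    using vertex_match_partner[of q q'] vertex_match_partner[of q' q] by auto
  then show "vertex_partner s g q \<in> strand_pts H g" "vertex_partner s g (vertex_partner s g q) = q"
    "vertex_partner s g q \<noteq> q"
    "(q, vertex_partner s g q) \<in> vertex_match H s g \<union> (vertex_match H s g)\<inverse>"
    by auto
qed

lemma edge_match_except_partner:
  assumes p: "p \<in> edge_perms H i g" and r0: "r0 \<in> edge_reps H i"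
    and "(q, q') \<in> edge_match_except H i g p r0"
  shows "edge_partner i g p q = q'" "edge_partner i g p q' = q"
    "q \<in> strand_pts H g" "q' \<in> strand_pts H g" "q' \<noteq> q"
    "fst q \<notin> {r0, i r0}" "fst q' \<notin> {r0, i r0}"
proof -
  from assms(3) obtain r j where r: "r \<in> edge_reps H i" "r \<noteq> r0" "j < g r"
    and q: "q = (r, j)" "q' = (i r, g r - 1 - p r j)"
    unfolding edge_match_except_def by blast
  have rH: "r \<in> H" "r < i r" using r(1) by (auto simp: edge_reps_def)
  have perm: "p r permutes {..<g r}" using edge_perm_permutes[OF p r(1)] .
  have pj: "p r j < g r" using permutes_in_image[OF perm] r(3) by simp
  show "edge_partner i g p q = q'" using q rH(2) by simp
  show "edge_partner i g p q' = q"
    using q rH pj i_involution g_i permutes_inverses(2)[OF perm] by (simp add: Suc_diff_Suc)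
  show "q \<in> strand_pts H g" "q' \<in> strand_pts H g"
    using q rH r(3) pj i_closed g_i by (auto simp: strand_pts_def)
  show "q' \<noteq> q" using q i_no_fix[OF rH(1)] by simp
  have "r \<noteq> i r0" "i r \<noteq> r0" using r(1) r0 i_not_edge_rep i_involution rH(1) by metis+
  moreover have "i r \<noteq> i r0"
    using r(2) i_involution rH(1) r0 by (metis edge_reps_def mem_Collect_eq)
  ultimately show "fst q \<notin> {r0, i r0}" "fst q' \<notin> {r0, i r0}" using q r(2) by auto
qed

lemma strand_pt_edge_matched:
  assumes p: "p \<in> edge_perms H i g" and hj: "(h, j) \<in> strand_pts H g" "h \<notin> {r0, i r0}"
  shows "\<exists>q'. ((h, j), q') \<in> edge_match_except H i g p r0 \<union> (edge_match_except H i g p r0)\<inverse>"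
proof -
  have h: "h \<in> H" "j < g h" using hj(1) by (auto simp: strand_pts_def)
  show ?thesis
  proof (cases "h < i h")
    case True
    then have "((h, j), (i h, g h - 1 - p h j)) \<in> edge_match_except H i g p r0"
      using h hj(2) by (auto simp: edge_match_except_def edge_reps_def)
    then show ?thesis by blast
  next
    case False
    define r where "r = i h"
    have "r < h" using False i_no_fix[OF h(1)] by (simp add: r_def)
    moreover have "i r = h" using i_involution[OF h(1)] by (simp add: r_def)
    ultimately have r: "r \<in> edge_reps H i" "i r = h" "r \<noteq> r0"
      using i_closed[OF h(1)] hj(2) by (auto simp: r_def edge_reps_def)
    have perm: "p r permutes {..<g r}" using edge_perm_permutes[OF p r(1)] .
    define j' where "j' = inv (p r) (g r - 1 - j)"
    have j': "j' < g r" "p r j' = g r - 1 - j"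
      using h g_i permutes_in_image[OF permutes_inv[OF perm]] permutes_inverses(1)[OF perm]
      by (auto simp: j'_def r_def)
    have "g r - 1 - p r j' = j" using j'(2) h g_i by (simp add: r_def)
    then have "((r, j'), (h, j)) \<in> edge_match_except H i g p r0"
      using r j'(1) unfolding edge_match_except_def by force
    then show ?thesis by blast
  qed
qed

lemma edge_partner_involution:
  assumes "p \<in> edge_perms H i g" "r0 \<in> edge_reps H i"
    and "q \<in> strand_pts H g" "fst q \<notin> {r0, i r0}"
  shows "edge_partner i g p q \<in> strand_pts H g" "fst (edge_partner i g p q) \<notin> {r0, i r0}"
    "edge_partner i g p (edge_partner i g p q) = q" "edge_partner i g p q \<noteq> q"
    "(q, edge_partner i g p q) \<in> edge_match_except H i g p r0 \<union> (edge_match_except H i g p r0)\<inverse>"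
proof -
  let ?M = "edge_match_except H i g p r0"
  obtain q' where "(q, q') \<in> ?M \<union> ?M\<inverse>"
    using strand_pt_edge_matched[OF assms(1), of "fst q" "snd q" r0] assms(3,4) by auto
  then have "edge_partner i g p q = q' \<and> edge_partner i g p q' = q \<and> q' \<in> strand_pts H g
      \<and> fst q' \<notin> {r0, i r0} \<and> q' \<noteq> q \<and> (q, q') \<in> ?M \<union> ?M\<inverse>"
    using edge_match_except_partner[OF assms(1,2), of q q']
      edge_match_except_partner[OF assms(1,2), of q' q] by auto
  then show "edge_partner i g p q \<in> strand_pts H g" "fst (edge_partner i g p q) \<notin> {r0, i r0}"
    "edge_partner i g p (edge_partner i g p q) = q" "edge_partner i g p q \<noteq> q"
    "(q, edge_partner i g p q) \<in> ?M \<union> ?M\<inverse>"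
    by auto
qed

lemma is_bridge_opposite:
  assumes "is_bridge H s i h"
  shows "is_bridge H s i (i h)"
proof -
  have "h \<in> H" using assms by (simp add: is_bridge_def)
  then have "{i h, i (i h)} = {h, i h}" using i_involution by auto
  then show ?thesis using assms i_closed \<open>h \<in> H\<close> by (simp add: is_bridge_def)
qed

lemma bridge_ends_not_linked:
  assumes "connected_rg H s i" and "is_bridge H s i h"
  shows "(h, i h) \<notin> equivcl (graph_rel H s i (H - {h, i h}))"
proof
  let ?R = "graph_rel H s i (H - {h, i h})"
  assume linked: "(h, i h) \<in> equivcl ?R"
  have h: "h \<in> H" using assms(2) by (simp add: is_bridge_def)
  have "(x, y) \<in> equivcl ?R" if "(x, y) \<in> graph_rel H s i H" for x y
  proof -
    from that consider "x \<in> H" "y = s x" | "x \<in> H" "y = i x" "x \<notin> {h, i h}"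
      | "x = h" "y = i h" | "x = i h" "y = h"
      unfolding graph_rel_def using i_involution[OF h] by blast
    then show ?thesis
    proof cases
      case 1
      then have "(x, y) \<in> ?R" by (auto simp: graph_rel_def)
      then show ?thesis by (intro r_into_rtrancl UnI1)
    next
      case 2
      then have "(x, y) \<in> ?R" by (auto simp: graph_rel_def)
      then show ?thesis by (intro r_into_rtrancl UnI1)
    next
      case 3
      then show ?thesis using linked by simp
    next
      case 4
      then show ?thesis using equivcl_sym[OF linked] by simp
    qed
  qed
  then have "equivcl (graph_rel H s i H) \<subseteq> equivcl ?R"
    by (intro equivcl_subset_equivcl) auto
  then show False
    using assms unfolding connected_rg_def is_bridge_def Let_def by blast
qed

lemma strand_link_dart_link:
  assumes "r0 \<in> edge_reps H i"
    and "(q, q') \<in> vertex_match H s g \<union> edge_match_except H i g p r0"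
  shows "(fst q, fst q') \<in> equivcl (graph_rel H s i (H - {r0, i r0}))"
proof -
  have "(fst q, fst q') \<in> graph_rel H s i (H - {r0, i r0})"
    using assms(2)
  proof
    assume "(q, q') \<in> vertex_match H s g"
    then show ?thesis by (auto simp: vertex_match_def graph_rel_def)
  next
    assume "(q, q') \<in> edge_match_except H i g p r0"
    then obtain r where "r \<in> edge_reps H i" "r \<noteq> r0" "fst q = r" "fst q' = i r"
      by (auto simp: edge_match_except_def)
    moreover have "r \<noteq> i r0" using i_not_edge_rep[OF assms(1)] \<open>r \<in> edge_reps H i\<close> by blast
    ultimately show ?thesis by (auto simp: graph_rel_def edge_reps_def)
  qed
  then show ?thesis by blast
qed

lemma finite_strand_pts: "finite (strand_pts H g)"
  using finite_darts by (simp add: strand_pts_def)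

lemma even_card_strand_class:
  "even (card {q \<in> strand_pts H g. (q0, q) \<in> equivcl (vertex_match H s g \<union> E)})"
proof (rule even_card_component_if_involution[where f = "vertex_partner s g"],
    fact finite_strand_pts)
  fix q assume q: "q \<in> strand_pts H g"
  show "vertex_partner s g q \<in> strand_pts H g" "vertex_partner s g (vertex_partner s g q) = q"
    "vertex_partner s g q \<noteq> q"
    by (rule vertex_partner_involution[OF q])+
  show "(q, vertex_partner s g q) \<in> (vertex_match H s g \<union> E) \<union> (vertex_match H s g \<union> E)\<inverse>"
    using vertex_partner_involution(4)[OF q] by blast
qed

lemma even_card_strand_class_off_edge:
  assumes p: "p \<in> edge_perms H i g" and r0: "r0 \<in> edge_reps H i"
  shows "even (card {q \<in> strand_pts H g \<inter> {q. fst q \<notin> {r0, i r0}}.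
    (q0, q) \<in> equivcl (V \<union> edge_match_except H i g p r0)})"
  (is "even (card {q \<in> _. (q0, q) \<in> equivcl ?M})")
proof (rule even_card_component_if_involution[where f = "edge_partner i g p"])
  show "finite (strand_pts H g \<inter> {q. fst q \<notin> {r0, i r0}})" using finite_strand_pts by simp
  fix q assume "q \<in> strand_pts H g \<inter> {q. fst q \<notin> {r0, i r0}}"
  then have q: "q \<in> strand_pts H g" "fst q \<notin> {r0, i r0}" by auto
  show "edge_partner i g p q \<in> strand_pts H g \<inter> {q. fst q \<notin> {r0, i r0}}"
    using edge_partner_involution(1,2)[OF p r0 q] by simp
  show "edge_partner i g p (edge_partner i g p q) = q" "edge_partner i g p q \<noteq> q"
    by (rule edge_partner_involution[OF p r0 q])+
  show "(q, edge_partner i g p q) \<in> ?M \<union> ?M\<inverse>"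
    using edge_partner_involution(5)[OF p r0 q] by blast
qed

lemma bridge_strand_returns:
  assumes "connected_rg H s i" and "is_bridge H s i r0" and r0: "r0 \<in> edge_reps H i"
    and "g r0 \<noteq> 0" and p: "p \<in> edge_perms H i g"
  shows "\<exists>b. 0 < b \<and> b < g r0
    \<and> ((r0, 0), (r0, b)) \<in> equivcl (vertex_match H s g \<union> edge_match_except H i g p r0)"
proof -
  define M where "M = vertex_match H s g \<union> edge_match_except H i g p r0"
  define C where "C = {q \<in> strand_pts H g. ((r0, 0), q) \<in> equivcl M}"
  define off where "off = {q :: nat \<times> nat. fst q \<notin> {r0, i r0}}"
  have "C \<inter> off = {q \<in> strand_pts H g \<inter> off. ((r0, 0), q) \<in> equivcl M}"
    by (auto simp: C_def)
  then have "even (card C)" "even (card (C \<inter> off))"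
    using even_card_strand_class even_card_strand_class_off_edge[OF p r0]
    by (simp_all add: C_def M_def off_def)
  moreover have "card C = card (C \<inter> off) + card (C - off)"
    by (rule card_Int_Diff) (simp add: C_def finite_strand_pts)
  ultimately have "even (card (C - off))" by simp
  then have "C - off \<noteq> {(r0, 0)}" by (intro notI) simp
  moreover have "(r0, 0) \<in> strand_pts H g"
    using r0 \<open>g r0 \<noteq> 0\<close> by (auto simp: strand_pts_def edge_reps_def)
  then have "(r0, 0) \<in> C - off" by (simp add: C_def off_def)
  ultimately obtain q where q: "q \<in> C - off" "q \<noteq> (r0, 0)" by blast
  then have q_linked: "((r0, 0), q) \<in> equivcl M" by (simp add: C_def)
  have "(r0, fst q) \<in> equivcl (graph_rel H s i (H - {r0, i r0}))"
    using equivcl_map[where h = fst, OF strand_link_dart_link[OF r0] q_linked[unfolded M_def]]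
    by simp
  then have "fst q \<noteq> i r0" using bridge_ends_not_linked[OF assms(1,2)] by metis
  then obtain b where b: "q = (r0, b)" using q(1) by (cases q) (simp add: off_def)
  have "b \<noteq> 0" "b < g r0" using q b by (simp_all add: C_def strand_pts_def)
  then show ?thesis using q_linked b unfolding M_def by blast
qed

lemma penrose_eq_0_if_strands_return:
  assumes r0: "r0 \<in> edge_reps H i"
    and returns: "\<And>p. p \<in> edge_perms H i g \<Longrightarrow> \<exists>b. 0 < b \<and> b < g r0
      \<and> ((r0, 0), (r0, b)) \<in> equivcl (vertex_match H s g \<union> edge_match_except H i g p r0)"
  shows "penrose H s i g = 0"
proof -
  have fin: "finite (edge_reps H i)" using finite_darts by (simp add: edge_reps_def)
  define ret where "ret p = (SOME b. 0 < b \<and> b < g r0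
      \<and> ((r0, 0), (r0, b)) \<in> equivcl (vertex_match H s g \<union> edge_match_except H i g p r0))" for p
  define \<phi> where "\<phi> p = p(r0 := p r0 \<circ> Transposition.transpose 0 (ret p))" for p
  have ret: "0 < ret p" "ret p < g r0"
      "((r0, 0), (r0, ret p)) \<in> equivcl (vertex_match H s g \<union> edge_match_except H i g p r0)"
    if "p \<in> edge_perms H i g" for p
    using someI_ex[OF returns[OF that]] by (simp_all add: ret_def)
  \<comment> \<open>\<phi> leaves the strands off the bridge untouched, so it makes the same choice again\<close>
  have ret_\<phi>: "ret (\<phi> p) = ret p" for p
    by (simp add: ret_def \<phi>_def edge_match_except_update)
  have \<phi>_perm: "\<phi> p \<in> edge_perms H i g" if "p \<in> edge_perms H i g" for p
    using that r0 ret[OF that] edge_perm_permutes[OF that r0]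
    by (auto simp: \<phi>_def edge_perms_def intro!: permutes_compose permutes_swap_id)
  have \<phi>_\<phi>: "\<phi> (\<phi> p) = p" for p
    unfolding \<phi>_def[of "\<phi> p"] ret_\<phi> by (simp add: \<phi>_def fun_eq_iff)
  have term_\<phi>: "(\<Prod>r\<in>edge_reps H i. sign (\<phi> p r)) * (-2) ^ num_curves H s i g (\<phi> p)
      = - ((\<Prod>r\<in>edge_reps H i. sign (p r)) * (-2) ^ num_curves H s i g p)"
    if "p \<in> edge_perms H i g" for p
    using sign_transpose_at[where p = p, OF fin r0 edge_perm_permutes[OF that r0] ret(1,2)[OF that]]
      num_curves_transpose_at[OF r0 ret(2,3)[OF that]]
    by (simp add: \<phi>_def)
  show ?thesis
    unfolding penrose_def edge_perms_def[symmetric]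
    by (rule sum_eq_0_if_sign_reversing_involution[where \<phi> = \<phi>]) (simp_all add: \<phi>_perm \<phi>_\<phi> term_\<phi>)
qed

end

theorem lemma4:
  fixes H :: "nat set" and s i g :: "nat \<Rightarrow> nat" and h0 :: nat
  assumes "spin_network H s i g"
    and "connected_rg H s i"
    and "is_bridge H s i h0"
    and "g h0 \<noteq> 0"
  shows "penrose H s i g = 0"
proof -
  interpret spin_net H s i g by unfold_locales (rule assms(1))
  define r0 where "r0 = min h0 (i h0)"
  have h0: "h0 \<in> H" using assms(3) by (simp add: is_bridge_def)
  have "r0 = h0 \<or> r0 = i h0" by (simp add: r0_def min_def)
  then have "is_bridge H s i r0" "g r0 \<noteq> 0"
    using assms(3,4) is_bridge_opposite g_i[OF h0] by auto
  moreover have "r0 \<in> edge_reps H i"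
    using h0 i_closed[OF h0] i_no_fix[OF h0] i_involution[OF h0]
    by (auto simp: r0_def min_def edge_reps_def)
  ultimately show ?thesis
    using bridge_strand_returns[OF assms(2)] by (intro penrose_eq_0_if_strands_return) auto
qed

end
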